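(* Every irrevocable (non-wasteful) distribution policy is individually rational with respect to greedy players.
   Context: Players: a finite set $N=\{a_1,\dots,a_n\}$. A characteristic function is $v:2^N\to\mathbb{R}_{\ge 0}$ with $v(\emptyset)=0$, monotone and bounded: $\mathsf{min}\le v(S)\le v(T)\le\mathsf{max}$ for all nonempty $S\subseteq T\subseteq N$, for fixed constants $0<\mathsf{min}\le\mathsf{max}$. Online process: an arrival order is a permutation $\pi=(\pi_1,\dots,\pi_n)$ of $N$; player $\pi_t$ arrives at time $t$. For $S\subseteq N$, $\pi_{|S}$ denotes the players of $S$ in the relative order of $\pi$; $\pi_{|S}$ is a prefix of $\pi_{|T}$ if $S\subseteq T$ and the players of $S$ are the first $|S|$ players of $\pi_{|T}$. Let $C^{t-1}$ be the coalition structure of players arrived before time $t$ ($C^0=\emptyset$). At time $t$, player $\pi_t$ either joins an existing coalition $S\in C^{t-1}$ or forms $\{\pi_t\}$ (choice $S=\emptyset$); decisions are never revised. A distribution policy $\varphi$ assigns to every coalition $S$ with order $\pi_{|S}$ a vector $(\varphi_i(S,\pi_{|S}))_{i\in S}$ with $\sum_{i\in S}\varphi_i=v(S)$. It is irrevocable if for every $\pi$, every $S\subseteq T\subseteq N$ with $\pi_{|S}$ a prefix of $\pi_{|T}$ and every $i\in S$, $\varphi_i(S,\pi_{|S})\le\varphi_i(T,\pi_{|T})$. Greedy players: $\pi_t$ chooses $S\in C^{t-1}\cup\{\emptyset\}$ maximizing $\varphi_{\pi_t}(S\cup\{\pi_t\},\pi_{|S\cup\{\pi_t\}})$ (predetermined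 tie-breaking); $C_g^t$ is the structure after time $t$. Individual rationality: for every $v$ and $\pi$, every $t\le n$, every $S\in C_g^t$ and every $i\in S$, $\varphi_i(S,\pi_{|S})\ge v(\{i\})$. *)

theory Defs
  imports Complex_Main "HOL-Library.Sublist"
begin

definition char_fun :: "'a set \<Rightarrow> ('a set \<Rightarrow> real) \<Rightarrow> real \<Rightarrow> real \<Rightarrow> bool" where
  "char_fun N v mn mx \<longleftrightarrow>
     finite N \<and> 0 < mn \<and> mn \<le> mx \<and> v {} = 0 \<and>
     (\<forall>S\<subseteq>N. 0 \<le> v S) \<and>
     (\<forall>S T. S \<noteq> {} \<and> S \<subseteq> T \<and> T \<subseteq> N \<longrightarrow> mn \<le> v S \<and> v S \<le> v T \<and> v T \<le> mx)"

definition arrival_order :: "'a set \<Rightarrow> 'a list \<Rightarrow> bool" where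
  "arrival_order N \<pi> \<longleftrightarrow> distinct \<pi> \<and> set \<pi> = N"

definition restr :: "'a list \<Rightarrow> 'a set \<Rightarrow> 'a list" where
  "restr \<pi> S = filter (\<lambda>x. x \<in> S) \<pi>"

definition distribution_policy :: "'a set \<Rightarrow> ('a set \<Rightarrow> real) \<Rightarrow> ('a list \<Rightarrow> 'a \<Rightarrow> real) \<Rightarrow> bool" where
  "distribution_policy N v \<phi> \<longleftrightarrow>
     (\<forall>\<pi> S. arrival_order N \<pi> \<and> S \<subseteq> N \<longrightarrow> (\<Sum>i\<in>S. \<phi> (restr \<pi> S) i) = v S)"

definition irrevocable :: "'a set \<Rightarrow> ('a list \<Rightarrow> 'a \<Rightarrow> real) \<Rightarrow> bool" where
  "irrevocable N \<phi> \<longleftrightarrow>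
     (\<forall>\<pi> S T. arrival_order N \<pi> \<and> S \<subseteq> T \<and> T \<subseteq> N \<and> prefix (restr \<pi> S) (restr \<pi> T) \<longrightarrow>
        (\<forall>i\<in>S. \<phi> (restr \<pi> S) i \<le> \<phi> (restr \<pi> T) i))"

text \<open>A run of greedy players: C t is the coalition structure after time t (C 0 = {}).
  At time t+1 the player pi!t joins some S in C t or forms a singleton (S = {}),
  choosing S maximising its own payoff; any admissible (tie-broken) choice is allowed.\<close>
definition greedy_run :: "('a list \<Rightarrow> 'a \<Rightarrow> real) \<Rightarrow> 'a list \<Rightarrow> (nat \<Rightarrow> 'a set set) \<Rightarrow> bool" where
  "greedy_run \<phi> \<pi> C \<longleftrightarrow> C 0 = {} \<and>
     (\<forall>t < length \<pi>. \<exists>S \<in> insert {} (C t).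
        (\<forall>S' \<in> insert {} (C t).
           \<phi> (restr \<pi> (insert (\<pi> ! t) S')) (\<pi> ! t) \<le> \<phi> (restr \<pi> (insert (\<pi> ! t) S)) (\<pi> ! t)) \<and>
        C (Suc t) = insert (insert (\<pi> ! t) S) (C t - {S}))"

definition individually_rational :: "'a set \<Rightarrow> ('a set \<Rightarrow> real) \<Rightarrow> ('a list \<Rightarrow> 'a \<Rightarrow> real) \<Rightarrow> bool" where
  "individually_rational N v \<phi> \<longleftrightarrow>
     (\<forall>\<pi> C. arrival_order N \<pi> \<and> greedy_run \<phi> \<pi> C \<longrightarrow>
        (\<forall>t \<le> length \<pi>. \<forall>S \<in> C t. \<forall>i \<in> S. v {i} \<le> \<phi> (restr \<pi> S) i))"

end

theory Submission
  imports Defs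
begin

text \<open>A greedy player can always stay alone, so on arrival it receives at least its singleton
  payoff, which any distribution policy fixes to be v {i}. Afterwards its coalition only grows
  by later arrivals, so the coalition's order is only ever extended at the end and irrevocability
  keeps the payoff from decreasing.\<close>

lemma restr_insert_nth_prefix:
  assumes "distinct \<pi>" and "t < length \<pi>" and "S \<subseteq> set (take t \<pi>)"
  shows "prefix (restr \<pi> S) (restr \<pi> (insert (\<pi> ! t) S))"
proof -
  have \<pi>_split: "\<pi> = take t \<pi> @ drop t \<pi>" by simp
  have new_player: "\<pi> ! t \<notin> set (take t \<pi>)"
    using assms(1,2) by (auto simp: in_set_conv_nth nth_eq_iff_index_eq)
  have no_later: "filter (\<lambda>x. x \<in> S) (drop t \<pi>) = []"
    using assms(1,3) \<pi>_split by (metis disjoint_iff distinct_append filter_False subsetD)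
  have keep_earlier:
    "filter (\<lambda>x. x \<in> insert (\<pi> ! t) S) (take t \<pi>) = filter (\<lambda>x. x \<in> S) (take t \<pi>)"
    using new_player by (intro filter_cong) auto
  have "restr \<pi> S = filter (\<lambda>x. x \<in> S) (take t \<pi>)"
    unfolding restr_def by (subst \<pi>_split) (simp only: filter_append no_later, simp)
  moreover have "restr \<pi> (insert (\<pi> ! t) S) =
      filter (\<lambda>x. x \<in> S) (take t \<pi>) @ filter (\<lambda>x. x \<in> insert (\<pi> ! t) S) (drop t \<pi>)"
    unfolding restr_def by (subst \<pi>_split) (simp only: filter_append keep_earlier)
  ultimately show ?thesis by simp
qed

lemma irrevocable_insert_nth:
  assumes "irrevocable N \<phi>" and "arrival_order N \<pi>" and "t < length \<pi>"
    and "S \<subseteq> set (take t \<pi>)" and "i \<in> S"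
  shows "\<phi> (restr \<pi> S) i \<le> \<phi> (restr \<pi> (insert (\<pi> ! t) S)) i"
proof -
  have "set (take t \<pi>) \<subseteq> N" and "\<pi> ! t \<in> N"
    using assms(2,3) set_take_subset unfolding arrival_order_def by fastforce+
  then have "S \<subseteq> insert (\<pi> ! t) S" and "insert (\<pi> ! t) S \<subseteq> N"
    using assms(4) by auto
  moreover have "prefix (restr \<pi> S) (restr \<pi> (insert (\<pi> ! t) S))"
    using assms(2-4) restr_insert_nth_prefix unfolding arrival_order_def by blast
  ultimately show ?thesis
    using assms(1,2,5) unfolding irrevocable_def by blast
qed

lemma distribution_policy_singleton:
  assumes "distribution_policy N v \<phi>" and "arrival_order N \<pi>" and "x \<in> N"
  shows "\<phi> (restr \<pi> {x}) x = v {x}"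
proof -
  have "(\<Sum>i\<in>{x}. \<phi> (restr \<pi> {x}) i) = v {x}"
    using assms unfolding distribution_policy_def by blast
  then show ?thesis by simp
qed

lemma greedy_run_step:
  assumes "greedy_run \<phi> \<pi> C" and "t < length \<pi>"
  obtains S where "S \<in> insert {} (C t)"
    and "\<phi> (restr \<pi> {\<pi> ! t}) (\<pi> ! t) \<le> \<phi> (restr \<pi> (insert (\<pi> ! t) S)) (\<pi> ! t)"
    and "C (Suc t) = insert (insert (\<pi> ! t) S) (C t - {S})"
proof -
  obtain S where "S \<in> insert {} (C t)"
    and "\<forall>S' \<in> insert {} (C t).
      \<phi> (restr \<pi> (insert (\<pi> ! t) S')) (\<pi> ! t) \<le> \<phi> (restr \<pi> (insert (\<pi> ! t) S)) (\<pi> ! t)"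
    and "C (Suc t) = insert (insert (\<pi> ! t) S) (C t - {S})"
    using assms unfolding greedy_run_def by blast
  then show thesis using that by fastforce
qed

lemma greedy_run_coalition_subset_take:
  assumes "greedy_run \<phi> \<pi> C" and "t \<le> length \<pi>" and "S \<in> C t"
  shows "S \<subseteq> set (take t \<pi>)"
  using assms(2,3)
proof (induction t arbitrary: S)
  case 0
  then show ?case using assms(1) by (simp add: greedy_run_def)
next
  case (Suc t)
  have IH: "S' \<subseteq> set (take t \<pi>)" if "S' \<in> C t" for S'
    using Suc.IH Suc.prems(1) that by simp
  obtain S0 where S0: "S0 \<in> insert {} (C t)"
    and C_Suc: "C (Suc t) = insert (insert (\<pi> ! t) S0) (C t - {S0})"
    using greedy_run_step[OF assms(1)] Suc.prems(1) by (metis Suc_le_lessD)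
  have "S = insert (\<pi> ! t) S0 \<or> S \<in> C t"
    using Suc.prems(2) C_Suc by blast
  moreover have "set (take t \<pi>) \<subseteq> set (take (Suc t) \<pi>)" and "\<pi> ! t \<in> set (take (Suc t) \<pi>)"
    using Suc.prems(1) by (auto simp: take_Suc_conv_app_nth)
  ultimately show ?case using IH S0 by blast
qed

lemma greedy_run_singleton_payoff_le:
  assumes "irrevocable N \<phi>" and "arrival_order N \<pi>" and "greedy_run \<phi> \<pi> C"
    and "t \<le> length \<pi>" and "S \<in> C t" and "i \<in> S"
  shows "\<phi> (restr \<pi> {i}) i \<le> \<phi> (restr \<pi> S) i"
  using assms(4-6)
proof (induction t arbitrary: S i)
  case 0
  then show ?case using assms(3) by (simp add: greedy_run_def)
next
  case (Suc t)
  let ?x = "\<pi> ! t"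
  obtain S0 where S0: "S0 \<in> insert {} (C t)"
    and greedy: "\<phi> (restr \<pi> {?x}) ?x \<le> \<phi> (restr \<pi> (insert ?x S0)) ?x"
    and C_Suc: "C (Suc t) = insert (insert ?x S0) (C t - {S0})"
    using greedy_run_step[OF assms(3)] Suc.prems(1) by (metis Suc_le_lessD)
  have S0_sub: "S0 \<subseteq> set (take t \<pi>)"
    using S0 greedy_run_coalition_subset_take[OF assms(3) Suc_leD[OF Suc.prems(1)]] by blast
  show ?case
  proof (cases "S \<in> C t")
    case True
    then show ?thesis using Suc by simp
  next
    case False
    then have S: "S = insert ?x S0" using Suc.prems(2) C_Suc by blast
    show ?thesis
    proof (cases "i = ?x")
      case False
      then have "i \<in> S0" "S0 \<in> C t" using Suc.prems(3) S S0 by auto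
      then show ?thesis
        using Suc.IH Suc.prems(1) irrevocable_insert_nth[OF assms(1,2) _ S0_sub] S
        by (metis Suc_le_lessD less_imp_le order_trans)
    qed (use greedy S in simp)
  qed
qed

theorem proposition2:
  fixes N :: "'a set" and v :: "'a set \<Rightarrow> real" and mn mx :: real
    and \<phi> :: "'a list \<Rightarrow> 'a \<Rightarrow> real"
  assumes "char_fun N v mn mx"
    and "distribution_policy N v \<phi>"
    and "irrevocable N \<phi>"
  shows "individually_rational N v \<phi>"
  unfolding individually_rational_def
proof (intro allI impI ballI)
  fix \<pi> C t S i
  assume "arrival_order N \<pi> \<and> greedy_run \<phi> \<pi> C"
  then have order: "arrival_order N \<pi>" and run: "greedy_run \<phi> \<pi> C" by simp_all
  assume "t \<le> length \<pi>" and "S \<in> C t" and "i \<in> S"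
  have "S \<subseteq> set (take t \<pi>)"
    by (rule greedy_run_coalition_subset_take[OF run \<open>t \<le> length \<pi>\<close> \<open>S \<in> C t\<close>])
  then have "i \<in> set \<pi>"
    using \<open>i \<in> S\<close> by (meson in_set_takeD subsetD)
  then have "i \<in> N"
    using order unfolding arrival_order_def by simp
  then have "v {i} = \<phi> (restr \<pi> {i}) i"
    using distribution_policy_singleton[OF assms(2) order] by simp
  also have "\<dots> \<le> \<phi> (restr \<pi> S) i"
    by (rule greedy_run_singleton_payoff_le[OF assms(3) order run \<open>t \<le> length \<pi>\<close> \<open>S \<in> C t\<close> \<open>i \<in> S\<close>])
  finally show "v {i} \<le> \<phi> (restr \<pi> S) i" .
qed

end
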